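(* For every homogeneous ideal $I^h\subset\mathbb{K}[S_M^h]$ and every graded sparse order $\prec_h$, there exists a finite sparse Gröbner basis of $I^h$ with respect to $\prec_h$.
   Context: Let $\mathbb{K}$ be a field of characteristic $0$, $M\subset\mathbb{R}^n$ a polytope with $0\in M$, $S_M\subset\mathbb{Z}^n$ the affine semigroup generated by $M\cap\mathbb{Z}^n$ and $S_M^h\subset\mathbb{Z}^{n+1}$ the one generated by $\{(s,1):s\in M\cap\mathbb{Z}^n\}$, both assumed pointed. $\mathbb{K}[S]$ is the semigroup algebra with monomials $X^s$, $X^sX^t=X^{s+t}$; $\mathbb{K}[S_M^h]$ is graded by $\deg X^{(s,d)}=d$ and "homogeneous" refers to this grading. $\chi:\mathbb{K}[S_M^h]\to\mathbb{K}[S_M]$, $X^{(s,d)}\mapsto X^s$. The affine degree $\delta^A(X^s)$ is the least $d$ with $(s,d)\in S_M^h$, extended to polynomials by the maximum over the support; the sparse degree of $f\in\mathbb{K}[S_M^h]$ is $\delta(f)=\delta^A(\chi(f))$. Given a monomial order $<_M$ on $\mathbb{K}[S_M]$, the sparse order is $X^s\prec X^r$ iff $\delta^A(X^s)<\delta^A(X^r)$, or equality and $X^s<_MX^r$; the associated graded sparse order on monomials of $\mathbb{K}[S_M^h]$ is $X^{(s,d)}\prec_hX^{(r,d')}$ iff $d<d'$, or $d=d'$ and $X^s\prec X^r$. Divisibility: $X^{(s,d_s)}\mid_\delta X^{(r,d_r)}$ if some monomial $X^{(t,d_t)}$ satisfies $X^{(s,d_s)}X^{(t,d_t)}=X^{(r,d_r)}$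 and $\delta(X^{(s,d_s)})+\delta(X^{(t,d_t)})=\delta(X^{(r,d_r)})$. A sparse Gröbner basis of $I^h$ w.r.t. $\prec_h$ is a subset of $I^h$ generating $I^h$ such that for every nonzero $f\in I^h$ some element $g$ of it satisfies $\mathrm{LM}_{\prec_h}(g)\mid_\delta\mathrm{LM}_{\prec_h}(f)$. *)

theory Defs
  imports "HOL-Analysis.Analysis" "HOL-Library.Poly_Mapping"
begin

inductive_set semigroup_gen :: "'a::monoid_add set \<Rightarrow> 'a set" for A where
  zero: "0 \<in> semigroup_gen A"
| gen_add: "a \<in> A \<Longrightarrow> s \<in> semigroup_gen A \<Longrightarrow> a + s \<in> semigroup_gen A"

definition pointed_semigroup :: "'a::ab_group_add set \<Rightarrow> bool" where
  "pointed_semigroup S \<longleftrightarrow> (\<forall>s. s \<in> S \<and> - s \<in> S \<longrightarrow> s = 0)"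

definition lattice_pts :: "(real^'n) set \<Rightarrow> (int^'n) set" where
  "lattice_pts M = {z. (\<chi> i. real_of_int (z $ i)) \<in> M}"

definition SM :: "(real^'n) set \<Rightarrow> (int^'n) set" where
  "SM M = semigroup_gen (lattice_pts M)"

definition SMh :: "(real^'n) set \<Rightarrow> ((int^'n) \<times> int) set" where
  "SMh M = semigroup_gen ((\<lambda>s. (s, 1)) ` lattice_pts M)"

definition salg :: "'a::monoid_add set \<Rightarrow> ('a \<Rightarrow>\<^sub>0 'k::comm_ring_1) set" where
  "salg S = {f. Poly_Mapping.keys f \<subseteq> S}"

definition is_ideal_in :: "('a::monoid_add \<Rightarrow>\<^sub>0 'k::comm_ring_1) set \<Rightarrow> ('a \<Rightarrow>\<^sub>0 'k) set \<Rightarrow> bool" where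
  "is_ideal_in R I \<longleftrightarrow> I \<subseteq> R \<and> 0 \<in> I \<and> (\<forall>f\<in>I. \<forall>g\<in>I. f + g \<in> I)
      \<and> (\<forall>h\<in>R. \<forall>f\<in>I. h * f \<in> I)"

definition ideal_gen_in :: "('a::monoid_add \<Rightarrow>\<^sub>0 'k::comm_ring_1) set \<Rightarrow> ('a \<Rightarrow>\<^sub>0 'k) set \<Rightarrow> ('a \<Rightarrow>\<^sub>0 'k) set" where
  "ideal_gen_in R G = \<Inter>{J. is_ideal_in R J \<and> G \<subseteq> J}"

definition hcomp :: "int \<Rightarrow> ('b \<times> int \<Rightarrow>\<^sub>0 'k::comm_ring_1) \<Rightarrow> ('b \<times> int \<Rightarrow>\<^sub>0 'k)" where
  "hcomp d f = (\<Sum>k\<in>{k\<in>Poly_Mapping.keys f. snd k = d}. Poly_Mapping.single k (Poly_Mapping.lookup f k))"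

definition homogeneous_ideal_in :: "('b::monoid_add \<times> int \<Rightarrow>\<^sub>0 'k::comm_ring_1) set \<Rightarrow> ('b \<times> int \<Rightarrow>\<^sub>0 'k) set \<Rightarrow> bool" where
  "homogeneous_ideal_in R I \<longleftrightarrow> is_ideal_in R I \<and> (\<forall>f\<in>I. \<forall>d. hcomp d f \<in> I)"

text \<open>A monomial order on K[S]: a strict total order on S, compatible with multiplication
  (i.e. translation in S), with 1 = X^0 the least monomial.\<close>
definition monomial_order_on :: "'a::monoid_add set \<Rightarrow> ('a \<Rightarrow> 'a \<Rightarrow> bool) \<Rightarrow> bool" where
  "monomial_order_on S lt \<longleftrightarrow>
     (\<forall>s\<in>S. \<not> lt s s)
   \<and> (\<forall>s\<in>S. \<forall>r\<in>S. \<forall>t\<in>S. lt s r \<longrightarrow> lt r t \<longrightarrow> lt s t)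
   \<and> (\<forall>s\<in>S. \<forall>r\<in>S. s \<noteq> r \<longrightarrow> lt s r \<or> lt r s)
   \<and> (\<forall>s\<in>S. \<forall>r\<in>S. \<forall>t\<in>S. lt s r \<longrightarrow> lt (s + t) (r + t))
   \<and> (\<forall>s\<in>S. s \<noteq> 0 \<longrightarrow> lt 0 s)"

definition adeg :: "(real^'n) set \<Rightarrow> int^'n \<Rightarrow> int" where
  "adeg M s = (LEAST d::int. (s, d) \<in> SMh M)"

definition sdeg_mon :: "(real^'n) set \<Rightarrow> (int^'n) \<times> int \<Rightarrow> int" where
  "sdeg_mon M m = adeg M (fst m)"

definition sparse_less :: "(real^'n) set \<Rightarrow> (int^'n \<Rightarrow> int^'n \<Rightarrow> bool) \<Rightarrow> int^'n \<Rightarrow> int^'n \<Rightarrow> bool" where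
  "sparse_less M lessM s r \<longleftrightarrow> adeg M s < adeg M r \<or> (adeg M s = adeg M r \<and> lessM s r)"

definition gsparse_less :: "(real^'n) set \<Rightarrow> (int^'n \<Rightarrow> int^'n \<Rightarrow> bool) \<Rightarrow> (int^'n) \<times> int \<Rightarrow> (int^'n) \<times> int \<Rightarrow> bool" where
  "gsparse_less M lessM a b \<longleftrightarrow> snd a < snd b \<or> (snd a = snd b \<and> sparse_less M lessM (fst a) (fst b))"

definition LM :: "('a \<Rightarrow> 'a \<Rightarrow> bool) \<Rightarrow> ('a \<Rightarrow>\<^sub>0 'k::zero) \<Rightarrow> 'a" where
  "LM lt f = (THE m. m \<in> Poly_Mapping.keys f \<and> (\<forall>m'\<in>Poly_Mapping.keys f. m' \<noteq> m \<longrightarrow> lt m' m))"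

definition sdvd :: "(real^'n) set \<Rightarrow> (int^'n) \<times> int \<Rightarrow> (int^'n) \<times> int \<Rightarrow> bool" where
  "sdvd M a b \<longleftrightarrow> (\<exists>t\<in>SMh M. a + t = b \<and> sdeg_mon M a + sdeg_mon M t = sdeg_mon M b)"

definition sparse_GB :: "(real^'n) set \<Rightarrow> (int^'n \<Rightarrow> int^'n \<Rightarrow> bool)
    \<Rightarrow> ((int^'n) \<times> int \<Rightarrow>\<^sub>0 'k::comm_ring_1) set \<Rightarrow> ((int^'n) \<times> int \<Rightarrow>\<^sub>0 'k) set \<Rightarrow> bool" where
  "sparse_GB M lessM I G \<longleftrightarrow> G \<subseteq> I \<and> ideal_gen_in (salg (SMh M)) G = I
     \<and> (\<forall>f\<in>I. f \<noteq> 0 \<longrightarrow> (\<exists>g\<in>G. g \<noteq> 0 \<and>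
          sdvd M (LM (gsparse_less M lessM) g) (LM (gsparse_less M lessM) f)))"

end

theory Submission
  imports Defs
begin

(*
  Every monomial of K[S_M^h] is a sum of generators (s, 1) with s one of the finitely many
  lattice points of M, so there are only finitely many monomials of each degree.  Record a
  monomial (s, d) by a factorisation of (s, adeg s) into generators together with its excess
  degree d - adeg s.  Componentwise comparison of these records implies delta-divisibility, so
  by Dickson's lemma finitely many leading monomials of I delta-divide all the others; one
  polynomial of I for each of them gives G.  Since adeg is subadditive, multiplying by a
  delta-cofactor preserves the graded sparse order, so the leading term of every element of I
  can be cancelled by a multiple of an element of G.  This reduction terminates because only
  finitely many monomials lie below a given one, hence G generates I.
*)

section \<open>Affine semigroups of a polytope and the affine degree\<close>

lemma semigroup_gen_add:
  fixes A :: "'a::monoid_add set"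
  assumes "a \<in> semigroup_gen A" and "b \<in> semigroup_gen A"
  shows "a + b \<in> semigroup_gen A"
  using assms by (induction a rule: semigroup_gen.induct)
    (auto simp: add.assoc intro: semigroup_gen.intros)

lemma semigroup_gen_iff_sum_mset:
  fixes A :: "'a::comm_monoid_add set"
  shows "x \<in> semigroup_gen A \<longleftrightarrow> (\<exists>m. set_mset m \<subseteq> A \<and> sum_mset m = x)"
proof
  assume "x \<in> semigroup_gen A"
  then show "\<exists>m. set_mset m \<subseteq> A \<and> sum_mset m = x"
  proof induction
    case zero
    show ?case by (intro exI[of _ "{#}"]) simp
  next
    case (gen_add a s)
    then obtain m where "set_mset m \<subseteq> A" "sum_mset m = s" by blast
    with gen_add.hyps show ?case by (intro exI[of _ "add_mset a m"]) auto
  qed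
next
  assume "\<exists>m. set_mset m \<subseteq> A \<and> sum_mset m = x"
  then obtain m where "set_mset m \<subseteq> A" "sum_mset m = x" by blast
  then show "x \<in> semigroup_gen A"
    by (induction m arbitrary: x) (auto intro: semigroup_gen.intros)
qed

lemma snd_sum_mset_eq_size:
  assumes "set_mset m \<subseteq> (\<lambda>s. (s, 1::int)) ` A"
  shows "snd (sum_mset m) = int (size m)"
  using assms by (induction m) auto

lemma finite_lattice_pts:
  fixes M :: "(real^'n) set"
  assumes "bounded M"
  shows "finite (lattice_pts M)"
proof -
  obtain B where B: "\<And>x. x \<in> M \<Longrightarrow> norm x \<le> B" using assms bounded_iff by blast
  define C where "C = \<lceil>B\<rceil>"
  have "lattice_pts M \<subseteq> vec_lambda ` PiE UNIV (\<lambda>_. {-C..C})"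
  proof
    fix z assume z: "z \<in> lattice_pts M"
    have "\<bar>z $ i\<bar> \<le> C" for i
    proof -
      have "\<bar>(\<chi> i. real_of_int (z $ i)) $ i\<bar> \<le> B"
        using component_le_norm_cart B z unfolding lattice_pts_def by (blast intro: order_trans)
      then show ?thesis unfolding C_def by simp linarith
    qed
    then have "(\<lambda>i. z $ i) \<in> PiE UNIV (\<lambda>_. {-C..C})" by (simp add: PiE_iff abs_le_iff minus_le_iff)
    then show "z \<in> vec_lambda ` PiE UNIV (\<lambda>_. {-C..C})" by (rule image_eqI[rotated]) simp
  qed
  then show ?thesis by (rule finite_subset) (simp add: finite_PiE)
qed

lemma zero_in_lattice_pts: "0 \<in> M \<Longrightarrow> 0 \<in> lattice_pts M"
  by (simp add: lattice_pts_def zero_vec_def)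

lemma fst_SMh: "x \<in> SMh M \<Longrightarrow> fst x \<in> SM M"
  unfolding SMh_def SM_def
  by (induction x rule: semigroup_gen.induct) (auto intro: semigroup_gen.intros)

lemma snd_SMh_nonneg: "x \<in> SMh M \<Longrightarrow> 0 \<le> snd x"
  unfolding SMh_def by (induction x rule: semigroup_gen.induct) auto

lemma zero_degree_SMh:
  assumes "0 \<in> M" and "0 \<le> e"
  shows "(0, e) \<in> SMh M"
proof -
  have "(0, int n) \<in> SMh M" for n
  proof (induction n)
    case 0
    show ?case by (simp add: SMh_def zero_prod_def[symmetric] semigroup_gen.zero)
  next
    case (Suc n)
    then have "(0, 1) + (0, int n) \<in> SMh M"
      using zero_in_lattice_pts[OF assms(1)] unfolding SMh_def by (blast intro: semigroup_gen.gen_add)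
    then show ?case by simp
  qed
  from this[of "nat e"] show ?thesis using assms(2) by simp
qed

lemma finite_SMh_degree_le:
  assumes "finite (lattice_pts M)"
  shows "finite {x \<in> SMh M. snd x \<le> e}"
proof -
  let ?G = "(\<lambda>s. (s, 1::int)) ` lattice_pts M"
  have "{x \<in> SMh M. snd x \<le> e} \<subseteq> sum_mset ` (\<Union>n\<le>nat e. multisets_of_size ?G n)"
  proof
    fix x assume x: "x \<in> {x \<in> SMh M. snd x \<le> e}"
    then obtain m where m: "set_mset m \<subseteq> ?G" "sum_mset m = x"
      unfolding SMh_def semigroup_gen_iff_sum_mset by blast
    then have "int (size m) \<le> e" using x snd_sum_mset_eq_size[OF m(1)] by simp
    then have "size m \<le> nat e" by linarith
    with m show "x \<in> sum_mset ` (\<Union>n\<le>nat e. multisets_of_size ?G n)"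
      by (auto simp: multisets_of_size_def)
  qed
  moreover have "finite (\<Union>n\<le>nat e. multisets_of_size ?G n)" using assms by auto
  ultimately show ?thesis by (meson finite_imageI finite_subset)
qed

lemma
  fixes P :: "int \<Rightarrow> bool"
  assumes "P d" and nonneg: "\<And>d. P d \<Longrightarrow> 0 \<le> d"
  shows LeastI_int_nonneg: "P (LEAST d. P d)"
    and Least_le_int_nonneg: "(LEAST d. P d) \<le> d"
proof -
  define n where "n = (LEAST n. P (int n))"
  have "P (int (nat d))" using assms by simp
  then have Pn: "P (int n)" unfolding n_def by (rule LeastI)
  have "(LEAST d. P d) = int n"
  proof (rule Least_equality)
    fix d' assume "P d'"
    with nonneg[OF this] have "n \<le> nat d'" unfolding n_def by (metis Least_le int_nat_eq)
    with nonneg[OF \<open>P d'\<close>] show "int n \<le> d'" by linarith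
  qed (fact Pn)
  moreover have "n \<le> nat d" unfolding n_def using \<open>P (int (nat d))\<close> by (rule Least_le)
  ultimately show "P (LEAST d. P d)" and "(LEAST d. P d) \<le> d"
    using Pn nonneg[OF \<open>P d\<close>] by simp_all
qed

lemma
  assumes "(s, d) \<in> SMh M"
  shows SMh_adeg: "(s, adeg M s) \<in> SMh M"
    and adeg_le: "adeg M s \<le> d"
  using LeastI_int_nonneg[of "\<lambda>d. (s, d) \<in> SMh M", OF assms]
    Least_le_int_nonneg[of "\<lambda>d. (s, d) \<in> SMh M", OF assms] snd_SMh_nonneg
  unfolding adeg_def by fastforce+

lemma adeg_add_le:
  assumes "(s, d) \<in> SMh M" and "(r, e) \<in> SMh M"
  shows "adeg M (s + r) \<le> adeg M s + adeg M r"
proof -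
  have "(s, adeg M s) + (r, adeg M r) \<in> SMh M"
    using SMh_adeg[OF assms(1)] SMh_adeg[OF assms(2)] unfolding SMh_def by (rule semigroup_gen_add)
  then show ?thesis by (simp add: adeg_le)
qed

lemma sdvd_if_subseteq_mset:
  assumes "0 \<in> M"
    and my: "set_mset my \<subseteq> (\<lambda>s. (s, 1)) ` lattice_pts M"
    and sum_mx: "sum_mset mx = (fst x, adeg M (fst x))"
    and sum_my: "sum_mset my = (fst y, adeg M (fst y))"
    and "mx \<subseteq># my"
    and excess: "snd x - adeg M (fst x) \<le> snd y - adeg M (fst y)"
  shows "sdvd M x y"
proof -
  \<comment> \<open>The cofactor is the difference of the two factorisations, padded with copies of the
    generator (0, 1) to make up the difference of the excess degrees.\<close>
  have in_SMh: "sum_mset m \<in> SMh M" if "m \<subseteq># my" for m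
    using set_mset_mono[OF that] my unfolding SMh_def semigroup_gen_iff_sum_mset by blast
  have diff: "sum_mset (my - mx) = (fst y - fst x, adeg M (fst y) - adeg M (fst x))"
    using \<open>mx \<subseteq># my\<close> by (simp add: sum_mset_diff sum_mx sum_my)
  define t where "t = sum_mset (my - mx) + (0, (snd y - snd x) - (adeg M (fst y) - adeg M (fst x)))"
  have "sum_mset (my - mx) \<in> SMh M" by (rule in_SMh) simp
  moreover have "(0, (snd y - snd x) - (adeg M (fst y) - adeg M (fst x))) \<in> SMh M"
    using excess by (intro zero_degree_SMh[OF \<open>0 \<in> M\<close>]) simp
  ultimately have "t \<in> SMh M" unfolding t_def SMh_def by (rule semigroup_gen_add)
  moreover have "x + t = y" by (simp add: t_def diff prod_eq_iff)
  moreover have "adeg M (fst t) \<le> adeg M (fst y) - adeg M (fst x)"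
    using adeg_le[OF \<open>sum_mset (my - mx) \<in> SMh M\<close>[unfolded diff]] by (simp add: t_def diff)
  moreover have "adeg M (fst y) \<le> adeg M (fst x) + adeg M (fst t)"
  proof -
    have "(fst x, adeg M (fst x)) \<in> SMh M" using in_SMh[OF \<open>mx \<subseteq># my\<close>] sum_mx by simp
    moreover have "(fst t, snd t) \<in> SMh M" using \<open>t \<in> SMh M\<close> by simp
    ultimately have "adeg M (fst x + fst t) \<le> adeg M (fst x) + adeg M (fst t)" by (rule adeg_add_le)
    then show ?thesis using \<open>x + t = y\<close> by auto
  qed
  ultimately have "sdeg_mon M x + sdeg_mon M t = sdeg_mon M y" by (simp add: sdeg_mon_def)
  with \<open>t \<in> SMh M\<close> \<open>x + t = y\<close> show ?thesis unfolding sdvd_def by blast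
qed

section \<open>Dickson's lemma and delta-divisibility\<close>

lemma Dickson_finite_basis:
  fixes \<phi> :: "'a \<Rightarrow> 'i \<Rightarrow> nat"
  assumes "finite P"
  shows "\<exists>F\<subseteq>A. finite F \<and> (\<forall>a\<in>A. \<exists>b\<in>F. \<forall>i\<in>P. \<phi> b i \<le> \<phi> a i)"
  using assms
proof (induction P arbitrary: A rule: finite_psubset_induct)
  case (psubset P)
  show ?case
  proof (cases "A = {}")
    case True
    then show ?thesis by blast
  next
    case False
    then obtain a0 where "a0 \<in> A" by blast
    let ?slice = "\<lambda>i v. {a \<in> A. \<phi> a i = v}"
    let ?basis = "\<lambda>i v F. F \<subseteq> ?slice i v \<and> finite F
      \<and> (\<forall>a\<in>?slice i v. \<exists>b\<in>F. \<forall>j\<in>P - {i}. \<phi> b j \<le> \<phi> a j)"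
    define Fs where "Fs i v = (SOME F. ?basis i v F)" for i v
    have Fs: "?basis i v (Fs i v)" if "i \<in> P" for i v
    proof -
      have "\<exists>F. ?basis i v F" using psubset.IH[of "P - {i}" "?slice i v"] that by blast
      then show ?thesis unfolding Fs_def by (rule someI_ex)
    qed
    define F where "F = insert a0 (\<Union>i\<in>P. \<Union>v<\<phi> a0 i. Fs i v)"
    have "\<exists>b\<in>F. \<forall>i\<in>P. \<phi> b i \<le> \<phi> a i" if "a \<in> A" for a
    proof (cases "\<forall>i\<in>P. \<phi> a0 i \<le> \<phi> a i")
      case True
      then show ?thesis unfolding F_def by blast
    next
      case False
      then obtain i where i: "i \<in> P" "\<phi> a i < \<phi> a0 i" by (auto simp: not_le)
      then obtain b where b: "b \<in> Fs i (\<phi> a i)" "\<forall>j\<in>P - {i}. \<phi> b j \<le> \<phi> a j"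
        using Fs[OF i(1)] \<open>a \<in> A\<close> by blast
      moreover have "\<phi> b i = \<phi> a i" using Fs[OF i(1)] b(1) by blast
      ultimately have "\<forall>j\<in>P. \<phi> b j \<le> \<phi> a j" by (metis Diff_iff empty_iff insert_iff order_refl)
      moreover have "b \<in> F" unfolding F_def using i b(1) by blast
      ultimately show ?thesis by blast
    qed
    moreover have "F \<subseteq> A" unfolding F_def using \<open>a0 \<in> A\<close> Fs by blast
    moreover have "finite F" unfolding F_def using Fs psubset.hyps by auto
    ultimately show ?thesis by blast
  qed
qed

lemma finite_sdvd_basis:
  fixes M :: "(real^'n) set"
  assumes "0 \<in> M" and "finite (lattice_pts M)" and "L \<subseteq> SMh M"
  shows "\<exists>F\<subseteq>L. finite F \<and> (\<forall>y\<in>L. \<exists>x\<in>F. sdvd M x y)"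
proof -
  let ?G = "(\<lambda>s. (s, 1::int)) ` lattice_pts M"
  have rep_ex: "\<exists>m. set_mset m \<subseteq> ?G \<and> sum_mset m = (fst x, adeg M (fst x))"
    if "x \<in> SMh M" for x
    using SMh_adeg[of "fst x" "snd x"] that unfolding SMh_def semigroup_gen_iff_sum_mset by simp
  define rep where "rep x = (SOME m. set_mset m \<subseteq> ?G \<and> sum_mset m = (fst x, adeg M (fst x)))"
    for x :: "(int^'n) \<times> int"
  have rep: "set_mset (rep x) \<subseteq> ?G \<and> sum_mset (rep x) = (fst x, adeg M (fst x))" if "x \<in> SMh M" for x
    unfolding rep_def using rep_ex[OF that] by (rule someI_ex)
  define \<phi> where "\<phi> x = case_option (nat (snd x - adeg M (fst x))) (count (rep x))" for x
  let ?P = "insert None (Some ` ?G)"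
  have sdvd_if_le: "sdvd M x y"
    if "x \<in> SMh M" "y \<in> SMh M" "\<forall>i\<in>?P. \<phi> x i \<le> \<phi> y i" for x y
  proof (rule sdvd_if_subseteq_mset[OF \<open>0 \<in> M\<close>])
    show "set_mset (rep y) \<subseteq> ?G" "sum_mset (rep x) = (fst x, adeg M (fst x))"
      "sum_mset (rep y) = (fst y, adeg M (fst y))"
      using rep that(1,2) by simp_all
    have "count (rep x) g \<le> count (rep y) g" for g
    proof (cases "g \<in> ?G")
      case True
      then have "\<phi> x (Some g) \<le> \<phi> y (Some g)" using that(3) by blast
      then show ?thesis by (simp add: \<phi>_def)
    next
      case False
      then have "g \<notin># rep x" using rep[OF that(1)] by blast
      then show ?thesis by (simp add: not_in_iff)
    qed
    then show "rep x \<subseteq># rep y" by (simp add: subseteq_mset_def)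
    have "\<phi> x None \<le> \<phi> y None" using that(3) by blast
    moreover have "adeg M (fst x) \<le> snd x" "adeg M (fst y) \<le> snd y"
      using adeg_le[of "fst x" "snd x"] adeg_le[of "fst y" "snd y"] that(1,2) by simp_all
    ultimately show "snd x - adeg M (fst x) \<le> snd y - adeg M (fst y)"
      unfolding \<phi>_def by simp
  qed
  obtain F where F: "F \<subseteq> L" "finite F" "\<forall>y\<in>L. \<exists>x\<in>F. \<forall>i\<in>?P. \<phi> x i \<le> \<phi> y i"
    using Dickson_finite_basis[of ?P L \<phi>] assms(2) by auto
  have "\<exists>x\<in>F. sdvd M x y" if "y \<in> L" for y
  proof -
    obtain x where "x \<in> F" "\<forall>i\<in>?P. \<phi> x i \<le> \<phi> y i" using F(3) \<open>y \<in> L\<close> by blast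
    moreover have "x \<in> SMh M" "y \<in> SMh M" using \<open>x \<in> F\<close> \<open>y \<in> L\<close> F(1) assms(3) by blast+
    ultimately show ?thesis using sdvd_if_le by blast
  qed
  with F(1,2) show ?thesis by blast
qed

section \<open>The graded sparse order\<close>

lemma monomial_order_on_strict_total:
  assumes "monomial_order_on S lt"
  shows "irreflp_on S lt" and "transp_on S lt" and "totalp_on S lt"
proof -
  note order = assms[unfolded monomial_order_on_def]
  show "irreflp_on S lt" unfolding irreflp_on_def by (fact order[THEN conjunct1])
  show "transp_on S lt" unfolding transp_on_def by (fact order[THEN conjunct2, THEN conjunct1])
  show "totalp_on S lt"
    unfolding totalp_on_def by (fact order[THEN conjunct2, THEN conjunct2, THEN conjunct1])
qed

lemma gsparse_less_strict_total:
  assumes "monomial_order_on (SM M) lessM"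
  shows "irreflp_on (SMh M) (gsparse_less M lessM)"
    and "transp_on (SMh M) (gsparse_less M lessM)"
    and "totalp_on (SMh M) (gsparse_less M lessM)"
proof -
  note lessM = monomial_order_on_strict_total[OF assms]
  show "irreflp_on (SMh M) (gsparse_less M lessM)"
    using lessM(1) fst_SMh
    unfolding irreflp_on_def gsparse_less_def sparse_less_def by blast
  show "transp_on (SMh M) (gsparse_less M lessM)"
    using lessM(2) fst_SMh unfolding transp_on_def gsparse_less_def sparse_less_def
    by (smt (verit))
  show "totalp_on (SMh M) (gsparse_less M lessM)"
    using lessM(3) fst_SMh unfolding totalp_on_def gsparse_less_def sparse_less_def
    by (smt (verit) prod_eq_iff)
qed

lemma wfp_on_if_finite_predecessors:
  assumes "irreflp_on A R" and "transp_on A R" and "\<And>x. x \<in> A \<Longrightarrow> finite {y \<in> A. R y x}"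
  shows "wfp_on A R"
proof (rule wfp_on_if_convertible_to_wfp_on[where f = "\<lambda>x. card {y \<in> A. R y x}" and Q = "(<)"])
  show "wfp_on ((\<lambda>x. card {y \<in> A. R y x}) ` A) (<)" by simp
  fix x y assume "x \<in> A" "y \<in> A" "R x y"
  then have "{z \<in> A. R z x} \<subset> {z \<in> A. R z y}"
    using assms(1,2) unfolding irreflp_on_def transp_on_def by blast
  then show "card {z \<in> A. R z x} < card {z \<in> A. R z y}"
    using assms(3)[OF \<open>y \<in> A\<close>] by (rule psubset_card_mono[rotated])
qed

lemma wfp_on_gsparse_less:
  assumes "finite (lattice_pts M)" and "monomial_order_on (SM M) lessM"
  shows "wfp_on (SMh M) (gsparse_less M lessM)"
proof (rule wfp_on_if_finite_predecessors)
  show "irreflp_on (SMh M) (gsparse_less M lessM)" "transp_on (SMh M) (gsparse_less M lessM)"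
    using gsparse_less_strict_total[OF assms(2)] by simp_all
  fix x
  have "{y \<in> SMh M. gsparse_less M lessM y x} \<subseteq> {y \<in> SMh M. snd y \<le> snd x}"
    unfolding gsparse_less_def by auto
  then show "finite {y \<in> SMh M. gsparse_less M lessM y x}"
    using finite_SMh_degree_le[OF assms(1)] by (rule finite_subset)
qed

lemma sdvd_obtains_order_preserving_cofactor:
  assumes "monomial_order_on (SM M) lessM" and "sdvd M x y" and "x \<in> SMh M"
  obtains t where "t \<in> SMh M" and "x + t = y"
    and "\<And>m. m \<in> SMh M \<Longrightarrow> gsparse_less M lessM m x \<Longrightarrow> gsparse_less M lessM (m + t) y"
proof -
  obtain t where t: "t \<in> SMh M" "x + t = y" "sdeg_mon M x + sdeg_mon M t = sdeg_mon M y"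
    using assms(2) unfolding sdvd_def by blast
  \<comment> \<open>adeg is additive along x + t but only subadditive along m + t, which keeps the
    comparison of sparse degrees.\<close>
  have "gsparse_less M lessM (m + t) y" if m: "m \<in> SMh M" "gsparse_less M lessM m x" for m
  proof -
    have "adeg M (fst m + fst t) \<le> adeg M (fst m) + adeg M (fst t)"
      using m(1) t(1) by (intro adeg_add_le[of _ "snd m" _ _ "snd t"]) simp_all
    moreover have "lessM (fst m) (fst x) \<Longrightarrow> lessM (fst m + fst t) (fst x + fst t)"
      using assms(1) fst_SMh[OF m(1)] fst_SMh[OF assms(3)] fst_SMh[OF t(1)]
      unfolding monomial_order_on_def by blast
    ultimately show ?thesis
      using m(2) t(2,3) unfolding gsparse_less_def sparse_less_def sdeg_mon_def by auto
  qed
  with t that show ?thesis by blast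
qed

section \<open>Leading monomials and reduction\<close>

lemma
  fixes f :: "'a \<Rightarrow>\<^sub>0 'b::zero"
  assumes "irreflp_on S lt" and "transp_on S lt" and "totalp_on S lt"
    and "Poly_Mapping.keys f \<subseteq> S" and "f \<noteq> 0"
  shows LM_in_keys: "LM lt f \<in> Poly_Mapping.keys f"
    and less_LM: "\<And>m. m \<in> Poly_Mapping.keys f \<Longrightarrow> m \<noteq> LM lt f \<Longrightarrow> lt m (LM lt f)"
proof -
  let ?greatest = "\<lambda>g. g \<in> Poly_Mapping.keys f \<and> (\<forall>m\<in>Poly_Mapping.keys f. m \<noteq> g \<longrightarrow> lt m g)"
  have "transp_on (Poly_Mapping.keys f) lt" "totalp_on (Poly_Mapping.keys f) lt"
    using transp_on_subset totalp_on_subset assms(2-4) by blast+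
  then obtain g where "?greatest g"
    using Finite_Set.bex_greatest_element[of "Poly_Mapping.keys f" lt] \<open>f \<noteq> 0\<close> by auto
  moreover have "h = g" if "?greatest h" for h
  proof (rule ccontr)
    assume "h \<noteq> g"
    then have "lt h g" "lt g h" using that \<open>?greatest g\<close> by auto
    moreover have "g \<in> S" "h \<in> S" using that \<open>?greatest g\<close> assms(4) by blast+
    ultimately show False by (meson assms(1,2) irreflp_onD transp_onD)
  qed
  ultimately have "?greatest (LM lt f)" unfolding LM_def by (rule theI)
  then show "LM lt f \<in> Poly_Mapping.keys f" and "\<And>m. m \<in> Poly_Mapping.keys f \<Longrightarrow> m \<noteq> LM lt f \<Longrightarrow> lt m (LM lt f)"
    by blast+
qed

lemma lookup_single_mult:
  fixes g :: "'a::cancel_comm_monoid_add \<Rightarrow>\<^sub>0 'b::comm_semiring_1"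
  shows "Poly_Mapping.lookup (Poly_Mapping.single t c * g) (t + x) = c * Poly_Mapping.lookup g x"
proof -
  have "Poly_Mapping.lookup (Poly_Mapping.single t c * g) (t + x)
      = Sum_any (\<lambda>l. Poly_Mapping.lookup (Poly_Mapping.single t c) l
          * Sum_any (\<lambda>q. Poly_Mapping.lookup g q when t + x = l + q))"
    by (rule lookup_mult)
  also have "\<dots> = Sum_any (\<lambda>l. c * Sum_any (\<lambda>q. Poly_Mapping.lookup g q when t + x = l + q) when t = l)"
    by (rule Sum_any.cong) (auto simp: lookup_single when_def)
  also have "\<dots> = c * Sum_any (\<lambda>q. Poly_Mapping.lookup g q when x = q)"
    by simp
  finally show ?thesis by simp
qed

lemma keys_single_mult:
  fixes g :: "'a::monoid_add \<Rightarrow>\<^sub>0 'b::semiring_0"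
  shows "Poly_Mapping.keys (Poly_Mapping.single t c * g) \<subseteq> (+) t ` Poly_Mapping.keys g"
  using keys_mult[of "Poly_Mapping.single t c" g] by (auto split: if_splits)

lemma keys_subset_if_in_ideal: "is_ideal_in (salg S) I \<Longrightarrow> f \<in> I \<Longrightarrow> Poly_Mapping.keys f \<subseteq> S"
  unfolding is_ideal_in_def salg_def by blast

lemma is_ideal_in_add_monomial_mult:
  assumes "is_ideal_in (salg S) J" and "t \<in> S" and "f \<in> J" and "g \<in> J"
  shows "f + Poly_Mapping.single t c * g \<in> J"
proof -
  have "Poly_Mapping.single t c \<in> salg S" using \<open>t \<in> S\<close> by (simp add: salg_def)
  with assms show ?thesis unfolding is_ideal_in_def by blast
qed

lemma LM_reduction_in_ideal:
  fixes I :: "('a::cancel_comm_monoid_add \<Rightarrow>\<^sub>0 'k::field) set"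
  assumes I: "is_ideal_in (salg S) I"
    and order: "irreflp_on S lt" "transp_on S lt" "totalp_on S lt"
    and "f \<in> I" "g \<in> I" "f \<noteq> 0" "g \<noteq> 0" "t \<in> S"
    and shift: "LM lt g + t = LM lt f"
    and mono: "\<forall>m\<in>Poly_Mapping.keys g. lt m (LM lt g) \<longrightarrow> lt (m + t) (LM lt f)"
  obtains c where "f - Poly_Mapping.single t c * g \<in> I"
    and "f - Poly_Mapping.single t c * g = 0 \<or> lt (LM lt (f - Poly_Mapping.single t c * g)) (LM lt f)"
proof -
  let ?c = "Poly_Mapping.lookup f (LM lt f) / Poly_Mapping.lookup g (LM lt g)"
  define h where "h = f - Poly_Mapping.single t ?c * g"
  have "h \<in> I"
    using is_ideal_in_add_monomial_mult[OF I \<open>t \<in> S\<close> \<open>f \<in> I\<close> \<open>g \<in> I\<close>, of "- ?c"]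
    by (simp add: h_def single_uminus)
  note keys = keys_subset_if_in_ideal[OF I \<open>f \<in> I\<close>] keys_subset_if_in_ideal[OF I \<open>g \<in> I\<close>]
    keys_subset_if_in_ideal[OF I \<open>h \<in> I\<close>]
  have "lt (LM lt h) (LM lt f)" if "h \<noteq> 0"
  proof -
    have "Poly_Mapping.lookup g (LM lt g) \<noteq> 0"
      using LM_in_keys[OF order keys(2) \<open>g \<noteq> 0\<close>] by (simp add: in_keys_iff)
    moreover have "Poly_Mapping.lookup (Poly_Mapping.single t ?c * g) (LM lt f)
        = ?c * Poly_Mapping.lookup g (LM lt g)"
      using lookup_single_mult[of t ?c g "LM lt g"] shift by (simp add: add.commute)
    ultimately have "Poly_Mapping.lookup h (LM lt f) = 0"
      by (simp add: h_def lookup_minus)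
    then have ne: "LM lt h \<noteq> LM lt f"
      using LM_in_keys[OF order keys(3) \<open>h \<noteq> 0\<close>] by (auto simp: in_keys_iff)
    have "Poly_Mapping.keys h \<subseteq> Poly_Mapping.keys f \<union> Poly_Mapping.keys (Poly_Mapping.single t ?c * g)"
      unfolding h_def by (rule keys_diff)
    then have "LM lt h \<in> Poly_Mapping.keys f \<union> Poly_Mapping.keys (Poly_Mapping.single t ?c * g)"
      using LM_in_keys[OF order keys(3) \<open>h \<noteq> 0\<close>] by blast
    then show ?thesis
    proof
      assume "LM lt h \<in> Poly_Mapping.keys f"
      then show ?thesis using less_LM[OF order keys(1) \<open>f \<noteq> 0\<close>] ne by blast
    next
      assume "LM lt h \<in> Poly_Mapping.keys (Poly_Mapping.single t ?c * g)"
      then obtain m where m: "m \<in> Poly_Mapping.keys g" "LM lt h = m + t"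
        using keys_single_mult[of t ?c g] by (auto simp: add.commute)
      with ne shift have "m \<noteq> LM lt g" by auto
      with m show ?thesis using less_LM[OF order keys(2) \<open>g \<noteq> 0\<close>] mono by simp
    qed
  qed
  with \<open>h \<in> I\<close> that[of ?c] show thesis unfolding h_def by blast
qed

lemma ideal_subset_if_LM_reducible:
  fixes I J G :: "('a::cancel_comm_monoid_add \<Rightarrow>\<^sub>0 'k::field) set"
  assumes I: "is_ideal_in (salg S) I" and J: "is_ideal_in (salg S) J"
    and "G \<subseteq> I" and "G \<subseteq> J"
    and order: "irreflp_on S lt" "transp_on S lt" "totalp_on S lt" and "wfp_on S lt"
    and reducible: "\<And>f. f \<in> I \<Longrightarrow> f \<noteq> 0 \<Longrightarrow> \<exists>g\<in>G. g \<noteq> 0 \<and> (\<exists>t\<in>S. LM lt g + t = LM lt f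
        \<and> (\<forall>m\<in>Poly_Mapping.keys g. lt m (LM lt g) \<longrightarrow> lt (m + t) (LM lt f)))"
  shows "I \<subseteq> J"
proof -
  have LM_in_S: "LM lt f \<in> S" if "f \<in> I" "f \<noteq> 0" for f
    using LM_in_keys[OF order keys_subset_if_in_ideal[OF I that(1)] that(2)]
      keys_subset_if_in_ideal[OF I that(1)] by blast
  have "0 \<in> J" using J by (simp add: is_ideal_in_def)
  have reduce: "\<forall>f\<in>I. f \<noteq> 0 \<longrightarrow> LM lt f = u \<longrightarrow> f \<in> J" if "u \<in> S" for u
    using \<open>wfp_on S lt\<close>
  proof (induction u rule: wfp_on_induct)
    case in_set
    show ?case using that .
  next
    case (less u)
    show ?case
    proof (intro ballI impI)
      fix f assume f: "f \<in> I" "f \<noteq> 0" "LM lt f = u"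
      obtain g t where g: "g \<in> G" "g \<noteq> 0" "t \<in> S" "LM lt g + t = LM lt f"
        "\<forall>m\<in>Poly_Mapping.keys g. lt m (LM lt g) \<longrightarrow> lt (m + t) (LM lt f)"
        using reducible[OF f(1,2)] by blast
      have "g \<in> I" "g \<in> J" using g(1) \<open>G \<subseteq> I\<close> \<open>G \<subseteq> J\<close> by blast+
      obtain c where reduced: "f - Poly_Mapping.single t c * g \<in> I"
        "f - Poly_Mapping.single t c * g = 0 \<or> lt (LM lt (f - Poly_Mapping.single t c * g)) (LM lt f)"
        by (rule LM_reduction_in_ideal[OF I order f(1) \<open>g \<in> I\<close> f(2) g(2-5)])
      define h where "h = f - Poly_Mapping.single t c * g"
      have "h \<in> J"
      proof (cases "h = 0")
        case True
        with \<open>0 \<in> J\<close> show ?thesis by simp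
      next
        case False
        with reduced f(3) have "h \<in> I" "lt (LM lt h) u" unfolding h_def by auto
        with less.IH[OF LM_in_S] False show ?thesis by blast
      qed
      then have "h + Poly_Mapping.single t c * g \<in> J"
        using is_ideal_in_add_monomial_mult[OF J \<open>t \<in> S\<close> _ \<open>g \<in> J\<close>] by blast
      then show "f \<in> J" by (simp add: h_def)
    qed
  qed
  show ?thesis
  proof
    fix f assume "f \<in> I"
    then show "f \<in> J" using reduce[OF LM_in_S] \<open>0 \<in> J\<close> by (cases "f = 0") auto
  qed
qed

lemma ideal_gen_in_eq_if_LM_reducible:
  fixes I G :: "('a::cancel_comm_monoid_add \<Rightarrow>\<^sub>0 'k::field) set"
  assumes I: "is_ideal_in (salg S) I" and "G \<subseteq> I"
    and order: "irreflp_on S lt" "transp_on S lt" "totalp_on S lt" "wfp_on S lt"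
    and reducible: "\<And>f. f \<in> I \<Longrightarrow> f \<noteq> 0 \<Longrightarrow> \<exists>g\<in>G. g \<noteq> 0 \<and> (\<exists>t\<in>S. LM lt g + t = LM lt f
        \<and> (\<forall>m\<in>Poly_Mapping.keys g. lt m (LM lt g) \<longrightarrow> lt (m + t) (LM lt f)))"
  shows "ideal_gen_in (salg S) G = I"
  using ideal_subset_if_LM_reducible[OF I _ \<open>G \<subseteq> I\<close> _ order reducible] I \<open>G \<subseteq> I\<close>
  unfolding ideal_gen_in_def by blast

lemma sparse_GB_if_LM_sdvd:
  fixes I G :: "((int^'n) \<times> int \<Rightarrow>\<^sub>0 'k::field) set"
  assumes "finite (lattice_pts M)" and "monomial_order_on (SM M) lessM"
    and I: "is_ideal_in (salg (SMh M)) I" and "G \<subseteq> I"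
    and LM_sdvd: "\<And>f. f \<in> I \<Longrightarrow> f \<noteq> 0 \<Longrightarrow>
      \<exists>g\<in>G. g \<noteq> 0 \<and> sdvd M (LM (gsparse_less M lessM) g) (LM (gsparse_less M lessM) f)"
  shows "sparse_GB M lessM I G"
proof -
  let ?lt = "gsparse_less M lessM"
  note order = gsparse_less_strict_total[OF assms(2)] wfp_on_gsparse_less[OF assms(1,2)]
  have "ideal_gen_in (salg (SMh M)) G = I"
  proof (rule ideal_gen_in_eq_if_LM_reducible[OF I \<open>G \<subseteq> I\<close> order])
    fix f assume "f \<in> I" "f \<noteq> 0"
    then obtain g where g: "g \<in> G" "g \<noteq> 0" "sdvd M (LM ?lt g) (LM ?lt f)" using LM_sdvd by blast
    have keys: "Poly_Mapping.keys g \<subseteq> SMh M" using g(1) \<open>G \<subseteq> I\<close> keys_subset_if_in_ideal[OF I] by blast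
    obtain t where "t \<in> SMh M" "LM ?lt g + t = LM ?lt f"
      "\<And>m. m \<in> SMh M \<Longrightarrow> ?lt m (LM ?lt g) \<Longrightarrow> ?lt (m + t) (LM ?lt f)"
      using sdvd_obtains_order_preserving_cofactor[OF assms(2) g(3)] LM_in_keys[OF order(1-3) keys g(2)]
        keys by blast
    with g(1,2) keys show "\<exists>g\<in>G. g \<noteq> 0 \<and> (\<exists>t\<in>SMh M. LM ?lt g + t = LM ?lt f
        \<and> (\<forall>m\<in>Poly_Mapping.keys g. ?lt m (LM ?lt g) \<longrightarrow> ?lt (m + t) (LM ?lt f)))"
      by blast
  qed
  with \<open>G \<subseteq> I\<close> LM_sdvd show ?thesis unfolding sparse_GB_def by blast
qed

theorem mainTheorem4:
  fixes M :: "(real^'n) set"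
    and lessM :: "int^'n \<Rightarrow> int^'n \<Rightarrow> bool"
    and I :: "((int^'n) \<times> int \<Rightarrow>\<^sub>0 'k::field_char_0) set"
  assumes "polytope M"
    and "0 \<in> M"
    and "pointed_semigroup (SM M)"
    and "pointed_semigroup (SMh M)"
    and "monomial_order_on (SM M) lessM"
    and "homogeneous_ideal_in (salg (SMh M)) I"
  shows "\<exists>G. finite G \<and> sparse_GB M lessM I G"
proof -
  let ?lt = "gsparse_less M lessM"
  have fin: "finite (lattice_pts M)"
    using assms(1) by (simp add: finite_lattice_pts polytope_imp_bounded)
  have I: "is_ideal_in (salg (SMh M)) I"
    using assms(6) by (simp add: homogeneous_ideal_in_def)
  have "LM ?lt ` (I - {0}) \<subseteq> SMh M"
    using LM_in_keys[OF gsparse_less_strict_total[OF assms(5)]] keys_subset_if_in_ideal[OF I] by blast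
  from finite_sdvd_basis[OF assms(2) fin this] obtain F
    where F: "F \<subseteq> LM ?lt ` (I - {0})" "finite F" "\<forall>y\<in>LM ?lt ` (I - {0}). \<exists>x\<in>F. sdvd M x y"
    by blast
  then obtain G where G: "G \<subseteq> I - {0}" "finite G" "F = LM ?lt ` G"
    by (meson finite_subset_image)
  have "sparse_GB M lessM I G"
  proof (rule sparse_GB_if_LM_sdvd[OF fin assms(5) I])
    show "G \<subseteq> I" using G(1) by blast
    show "\<exists>g\<in>G. g \<noteq> 0 \<and> sdvd M (LM ?lt g) (LM ?lt f)" if "f \<in> I" "f \<noteq> 0" for f
      using F(3) G(1,3) that by blast
  qed
  with G(2) show ?thesis by blast
qed

end
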